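(* Let $(S,\mathcal C)$ be a connected connectoid and $T$ a weak normal tree of $(S,\mathcal C)$. Then a component $K\in\mathcal K(S\setminus V(T))$ has finite adhesion to $V(T)$ if and only if $N_K$ is finite.
   Context: A connectoid is given by a set $S$ and a set $\mathcal F$ of finite subsets of $S$ such that (i) $F\cup F'\in\mathcal F$ whenever $F,F'\in\mathcal F$ and $F\cap F'\neq\emptyset$, and (ii) $\emptyset\in\mathcal F$ and $\{s\}\in\mathcal F$ for every $s\in S$. A set $C\subseteq S$ is connected if for all $x,y\in C$ there is $F\in\mathcal F$ with $F\subseteq C$ and $x,y\in F$; $\mathcal C$ is the set of connected sets; $(S,\mathcal C)$ is connected if $S\in\mathcal C$. For $S'\subseteq S$, a component of $S'$ is a maximal connected subset, and $\mathcal K(S')$ is the set of components of $S'$. For $\hat S\subseteq S$, a component $K\in\mathcal K(S\setminus\hat S)$ has finite adhesion to $\hat S$ if there is a finite $X\subseteq\hat S$ with $K\in\mathcal K(S\setminus X)$. For a rooted tree $T$ with tree order $\le_T$ and $t\in V(T)$, let $\mathrm{Down}^\circ_T(t)=\{x\in V(T):x<_T t\}$ and let $K_t^T$ be the element of $\mathcal K(S\setminus\mathrm{Down}^\circ_T(t))$ containing $t$. A weak normal tree of $(S,\mathcal C)$ is a rooted undirected tree $T$ with $V(T)\subseteq S$ such that (1) for every $C\in\mathcal C$ and every two $\le_T$-incomparable $u,v\in C\cap V(T)$ there is $w\in C$ with $w\le_T u$ and $w\le_T v$, and (2) for all $u\le_T v$ in $V(T)$ there is $C\in\mathcal C$ containing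 $u,v$ with $C\cap\mathrm{Down}^\circ_T(u)=\emptyset$. For $K\in\mathcal K(S\setminus V(T))$, $N_K:=\{t\in V(T):K\subseteq K_t^T\}$. *)

theory Defs
  imports Main
begin

definition connectoid :: "'a set \<Rightarrow> 'a set set \<Rightarrow> bool" where
  "connectoid S F \<longleftrightarrow>
     (\<forall>X\<in>F. X \<subseteq> S \<and> finite X) \<and>
     (\<forall>X\<in>F. \<forall>Y\<in>F. X \<inter> Y \<noteq> {} \<longrightarrow> X \<union> Y \<in> F) \<and>
     {} \<in> F \<and> (\<forall>s\<in>S. {s} \<in> F)"

definition conn_sets :: "'a set \<Rightarrow> 'a set set \<Rightarrow> 'a set set" where
  "conn_sets S F = {C. C \<subseteq> S \<and> (\<forall>x\<in>C. \<forall>y\<in>C. \<exists>X\<in>F. X \<subseteq> C \<and> x \<in> X \<and> y \<in> X)}"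

definition comps :: "'a set \<Rightarrow> 'a set set \<Rightarrow> 'a set \<Rightarrow> 'a set set" where
  "comps S F S' = {K. K \<noteq> {} \<and> K \<subseteq> S' \<and> K \<in> conn_sets S F \<and>
      (\<forall>K'. K \<subseteq> K' \<and> K' \<subseteq> S' \<and> K' \<in> conn_sets S F \<longrightarrow> K' = K)}"

definition finite_adhesion :: "'a set \<Rightarrow> 'a set set \<Rightarrow> 'a set \<Rightarrow> 'a set \<Rightarrow> bool" where
  "finite_adhesion S F Sh K \<longleftrightarrow> (\<exists>X. X \<subseteq> Sh \<and> finite X \<and> K \<in> comps S F (S - X))"

definition is_walk :: "'a set \<Rightarrow> ('a \<Rightarrow> 'a \<Rightarrow> bool) \<Rightarrow> 'a list \<Rightarrow> bool" where
  "is_walk V E p \<longleftrightarrow> p \<noteq> [] \<and> set p \<subseteq> V \<and> (\<forall>i. Suc i < length p \<longrightarrow> E (p ! i) (p ! Suc i))"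

definition is_tree :: "'a set \<Rightarrow> ('a \<Rightarrow> 'a \<Rightarrow> bool) \<Rightarrow> bool" where
  "is_tree V E \<longleftrightarrow>
     (\<forall>x y. E x y \<longrightarrow> x \<in> V \<and> y \<in> V \<and> x \<noteq> y \<and> E y x) \<and>
     (\<forall>x\<in>V. \<forall>y\<in>V. \<exists>p. is_walk V E p \<and> hd p = x \<and> last p = y) \<and>
     \<not> (\<exists>p. is_walk V E p \<and> distinct p \<and> length p \<ge> 3 \<and> E (last p) (hd p))"

definition rooted_tree :: "'a set \<Rightarrow> ('a \<Rightarrow> 'a \<Rightarrow> bool) \<Rightarrow> 'a \<Rightarrow> bool" where
  "rooted_tree V E r \<longleftrightarrow> is_tree V E \<and> r \<in> V"

definition tree_le :: "'a set \<Rightarrow> ('a \<Rightarrow> 'a \<Rightarrow> bool) \<Rightarrow> 'a \<Rightarrow> 'a \<Rightarrow> 'a \<Rightarrow> bool" where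
  "tree_le V E r u v \<longleftrightarrow>
     (\<exists>p. is_walk V E p \<and> distinct p \<and> hd p = r \<and> last p = v \<and> u \<in> set p)"

definition tree_lt :: "'a set \<Rightarrow> ('a \<Rightarrow> 'a \<Rightarrow> bool) \<Rightarrow> 'a \<Rightarrow> 'a \<Rightarrow> 'a \<Rightarrow> bool" where
  "tree_lt V E r u v \<longleftrightarrow> tree_le V E r u v \<and> u \<noteq> v"

definition down_open :: "'a set \<Rightarrow> ('a \<Rightarrow> 'a \<Rightarrow> bool) \<Rightarrow> 'a \<Rightarrow> 'a \<Rightarrow> 'a set" where
  "down_open V E r t = {x\<in>V. tree_lt V E r x t}"

definition weak_normal_tree ::
  "'a set \<Rightarrow> 'a set set \<Rightarrow> 'a set \<Rightarrow> ('a \<Rightarrow> 'a \<Rightarrow> bool) \<Rightarrow> 'a \<Rightarrow> bool" where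
  "weak_normal_tree S F V E r \<longleftrightarrow>
     rooted_tree V E r \<and> V \<subseteq> S \<and>
     (\<forall>C\<in>conn_sets S F. \<forall>u\<in>C \<inter> V. \<forall>v\<in>C \<inter> V.
        \<not> tree_le V E r u v \<and> \<not> tree_le V E r v u \<longrightarrow>
        (\<exists>w\<in>C. tree_le V E r w u \<and> tree_le V E r w v)) \<and>
     (\<forall>u\<in>V. \<forall>v\<in>V. tree_le V E r u v \<longrightarrow>
        (\<exists>C\<in>conn_sets S F. u \<in> C \<and> v \<in> C \<and> C \<inter> down_open V E r u = {}))"

definition K_tree ::
  "'a set \<Rightarrow> 'a set set \<Rightarrow> 'a set \<Rightarrow> ('a \<Rightarrow> 'a \<Rightarrow> bool) \<Rightarrow> 'a \<Rightarrow> 'a \<Rightarrow> 'a set" where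
  "K_tree S F V E r t = (THE K. K \<in> comps S F (S - down_open V E r t) \<and> t \<in> K)"

definition N_K ::
  "'a set \<Rightarrow> 'a set set \<Rightarrow> 'a set \<Rightarrow> ('a \<Rightarrow> 'a \<Rightarrow> bool) \<Rightarrow> 'a \<Rightarrow> 'a set \<Rightarrow> 'a set" where
  "N_K S F V E r K = {t\<in>V. K \<subseteq> K_tree S F V E r t}"

end

theory Submission
  imports Defs
begin

text \<open>
  For \<open>t \<in> V\<close> the component \<open>K\<^sub>t\<close> avoids \<open>Down\<degree>(t)\<close>, so by the first axiom of weak normal trees
  every other tree vertex in \<open>K\<^sub>t\<close> lies above \<open>t\<close>. Hence if \<open>K\<close> is a component of \<open>S \<setminus> X\<close>
  with \<open>X \<subseteq> V\<close> finite, each \<open>t \<in> N\<^sub>K\<close> lies below some \<open>x \<in> X\<close>: otherwise \<open>K\<^sub>t \<subseteq> S \<setminus> X\<close> would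
  properly contain \<open>K\<close>. As down-closures in a tree are finite, \<open>N\<^sub>K\<close> is finite.
  Conversely \<open>K\<close> is a component of \<open>S \<setminus> N\<^sub>K\<close>: a connected proper extension \<open>K'\<close> of \<open>K\<close> there
  meets \<open>V\<close>, and for a tree-minimal vertex \<open>t\<close> of \<open>K' \<inter> V\<close> we get \<open>K \<subseteq> K' \<subseteq> K\<^sub>t\<close>, i.e. \<open>t \<in> N\<^sub>K\<close>.
\<close>

section \<open>Walks and paths in trees\<close>

lemma is_walk_singleton [simp]: "is_walk V E [x] \<longleftrightarrow> x \<in> V"
  by (simp add: is_walk_def)

lemma is_walk_Cons_Cons:
  "is_walk V E (x # y # xs) \<longleftrightarrow> x \<in> V \<and> E x y \<and> is_walk V E (y # xs)"
proof
  assume w: "is_walk V E (x # y # xs)"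
  have "E ((y # xs) ! i) ((y # xs) ! Suc i)" if "Suc i < length (y # xs)" for i
    using w that unfolding is_walk_def by (metis Suc_less_eq length_Cons nth_Cons_Suc)
  moreover have "E x y" using w unfolding is_walk_def by fastforce
  ultimately show "x \<in> V \<and> E x y \<and> is_walk V E (y # xs)"
    using w unfolding is_walk_def by auto
next
  assume h: "x \<in> V \<and> E x y \<and> is_walk V E (y # xs)"
  show "is_walk V E (x # y # xs)" unfolding is_walk_def
  proof (intro conjI allI impI)
    fix i assume "Suc i < length (x # y # xs)"
    then show "E ((x # y # xs) ! i) ((x # y # xs) ! Suc i)"
      using h unfolding is_walk_def by (cases i) auto
  qed (use h in \<open>auto simp: is_walk_def\<close>)
qed

lemma is_walk_append:
  assumes "xs \<noteq> []" "ys \<noteq> []"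
  shows "is_walk V E (xs @ ys) \<longleftrightarrow> is_walk V E xs \<and> is_walk V E ys \<and> E (last xs) (hd ys)"
  using assms
proof (induction xs)
  case (Cons x xs)
  then show ?case
    by (cases xs; cases ys) (auto simp: is_walk_Cons_Cons)
qed simp

lemma is_walk_prefix: "is_walk V E (xs @ ys) \<Longrightarrow> xs \<noteq> [] \<Longrightarrow> is_walk V E xs"
  by (cases "ys = []") (auto simp: is_walk_append)

lemma is_walk_suffix: "is_walk V E (xs @ ys) \<Longrightarrow> ys \<noteq> [] \<Longrightarrow> is_walk V E ys"
  by (cases "xs = []") (auto simp: is_walk_append)

lemma is_walk_rev:
  assumes sym: "\<And>x y. E x y \<Longrightarrow> E y x" and "is_walk V E p"
  shows "is_walk V E (rev p)"
  using assms(2)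
proof (induction p)
  case (Cons x xs)
  show ?case
  proof (cases xs)
    case (Cons z zs)
    with Cons.prems have "is_walk V E xs" "E x z" "x \<in> V" by (auto simp: is_walk_Cons_Cons)
    then show ?thesis using Cons.IH Cons is_walk_append[of "rev xs" "[x]" V E]
      by (auto simp: sym last_rev)
  qed (use Cons.prems in simp)
qed (simp add: is_walk_def)

lemma is_tree_sym: "is_tree V E \<Longrightarrow> E x y \<Longrightarrow> E y x"
  unfolding is_tree_def by blast

text \<open>Two paths leaving \<open>a\<close> through different neighbours and meeting again close a cycle,
  namely the first path up to its first common vertex \<open>z\<close> with the second, followed by the
  second path back from \<open>z\<close>.\<close>
lemma tree_paths_no_fork:
  assumes tree: "is_tree V E"
    and wp: "is_walk V E (a # p)" and dp: "distinct (a # p)"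
    and wq: "is_walk V E (a # q)" and dq: "distinct (a # q)"
    and ne: "p \<noteq> []" "q \<noteq> []" and hd_ne: "hd p \<noteq> hd q" and last_eq: "last p = last q"
  shows False
proof -
  have sym: "\<And>x y. E x y \<Longrightarrow> E y x" using tree is_tree_sym by metis
  have acyclic: "\<not> (\<exists>c. is_walk V E c \<and> distinct c \<and> length c \<ge> 3 \<and> E (last c) (hd c))"
    using tree unfolding is_tree_def by blast
  have "\<exists>x\<in>set p. x \<in> set q" using ne last_eq by (metis last_in_set)
  then obtain u1 z u2 where p: "p = u1 @ z # u2" and zq: "z \<in> set q"
    and u1: "\<forall>y\<in>set u1. y \<notin> set q"
    by (rule split_list_first_propE)
  obtain v1 v2 where q: "q = v1 @ z # v2" using zq by (meson split_list)
  have w1: "is_walk V E (a # u1 @ [z])"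
    using wp p is_walk_prefix[of V E "a # u1 @ [z]" u2] by simp
  have d1: "distinct (a # u1 @ [z])" using dp p by auto
  show False
  proof (cases "v1 = []")
    case True
    then have "u1 \<noteq> []" using hd_ne p q by auto
    then have "length (a # u1 @ [z]) \<ge> 3" by (cases u1) auto
    moreover have "E a z" using wq q True by (simp add: is_walk_Cons_Cons)
    ultimately show False using acyclic w1 d1 sym by fastforce
  next
    case False
    define c where "c = (a # u1 @ [z]) @ rev v1"
    have wv: "is_walk V E (v1 @ z # v2)" using wq q is_walk_suffix[of V E "[a]"] by simp
    have "is_walk V E v1" using wv False is_walk_prefix by blast
    moreover have "E (last v1) z" using wv False is_walk_append[of v1 "z # v2" V E] by simp
    ultimately have "is_walk V E c"
      unfolding c_def using is_walk_append[of "a # u1 @ [z]" "rev v1" V E] w1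
        is_walk_rev[OF sym] False sym by (simp add: hd_rev)
    moreover have "distinct c" unfolding c_def using d1 dq q u1 p dp by auto
    moreover have "length c \<ge> 3" unfolding c_def using False by (cases v1) auto
    moreover have "E a (hd v1)" using wq q False by (cases v1) (auto simp: is_walk_Cons_Cons)
    then have "E (last c) (hd c)" unfolding c_def using sym False by (simp add: last_rev)
    ultimately show False using acyclic by blast
  qed
qed

lemma tree_path_unique:
  assumes tree: "is_tree V E"
  shows "is_walk V E p \<Longrightarrow> distinct p \<Longrightarrow> is_walk V E q \<Longrightarrow> distinct q \<Longrightarrow>
    hd p = hd q \<Longrightarrow> last p = last q \<Longrightarrow> p = q"
proof (induction p arbitrary: q)
  case Nil then show ?case by (simp add: is_walk_def)
next
  case (Cons a p)
  obtain q' where q: "q = a # q'" using Cons.prems by (cases q) (auto simp: is_walk_def)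
  have last_in_tail: "xs = []" if "distinct (a # xs)" "last (a # xs) = a" for xs
    using that by (metis distinct.simps(2) last_ConsR last_in_set)
  show ?case
  proof (cases "p = [] \<or> q' = []")
    case True
    then have "p = [] \<and> q' = []" using Cons.prems q last_in_tail by (metis last.simps)
    then show ?thesis using q by simp
  next
    case False
    have "is_walk V E p" "is_walk V E q'"
      using Cons.prems q False is_walk_suffix[of V E "[a]"] by simp_all
    moreover have "distinct p" "distinct q'" "last p = last q'" using Cons.prems q False by simp_all
    moreover have "hd p = hd q'"
      using tree_paths_no_fork[OF tree, of a p q'] Cons.prems q False calculation by blast
    ultimately show ?thesis using Cons.IH q by simp
  qed
qed

definition root_path :: "'a set \<Rightarrow> ('a \<Rightarrow> 'a \<Rightarrow> bool) \<Rightarrow> 'a \<Rightarrow> 'a \<Rightarrow> 'a list" where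
  "root_path V E r v = (THE p. is_walk V E p \<and> distinct p \<and> hd p = r \<and> last p = v)"

lemma root_path_eq:
  assumes "is_tree V E" "is_walk V E p" "distinct p" "hd p = r" "last p = v"
  shows "root_path V E r v = p"
  unfolding root_path_def
proof (rule the_equality)
  fix q assume "is_walk V E q \<and> distinct q \<and> hd q = r \<and> last q = v"
  then show "q = p" using tree_path_unique[OF assms(1), of q p] assms by simp
qed (use assms in blast)

lemma tree_le_in_V: "tree_le V E r u v \<Longrightarrow> u \<in> V"
  unfolding tree_le_def is_walk_def by blast

lemma finite_tree_le_below:
  assumes "is_tree V E"
  shows "finite {u. tree_le V E r u v}"
proof (cases "\<exists>p. is_walk V E p \<and> distinct p \<and> hd p = r \<and> last p = v")
  case True
  then obtain p where p: "is_walk V E p" "distinct p" "hd p = r" "last p = v" by blast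
  have "u \<in> set p" if u: "tree_le V E r u v" for u
  proof -
    obtain q where "is_walk V E q" "distinct q" "hd q = r" "last q = v" "u \<in> set q"
      using u unfolding tree_le_def by blast
    then show ?thesis using tree_path_unique[OF assms, of q p] p by simp
  qed
  then have "{u. tree_le V E r u v} \<subseteq> set p" by blast
  then show ?thesis by (rule finite_subset) simp
next
  case False
  then have "{u. tree_le V E r u v} = {}" unfolding tree_le_def by blast
  then show ?thesis by simp
qed

lemma tree_lt_root_path_length:
  assumes tree: "is_tree V E" and "tree_lt V E r u v"
  shows "length (root_path V E r u) < length (root_path V E r v)"
proof -
  obtain p where p: "is_walk V E p" "distinct p" "hd p = r" "last p = v" "u \<in> set p"
    and "u \<noteq> v"
    using assms(2) unfolding tree_lt_def tree_le_def by blast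
  obtain p1 p2 where split: "p = p1 @ u # p2" using p(5) by (meson split_list)
  with p(4) \<open>u \<noteq> v\<close> have "p2 \<noteq> []" by auto
  have "is_walk V E (p1 @ [u])" using p(1) split is_walk_prefix[of V E "p1 @ [u]" p2] by simp
  moreover have "distinct (p1 @ [u])" using p(2) split by simp
  moreover have "hd (p1 @ [u]) = r" using p(3) split by (cases p1) auto
  ultimately have "root_path V E r u = p1 @ [u]" using root_path_eq[OF tree] by simp
  moreover have "root_path V E r v = p" using root_path_eq[OF tree p(1-4)] .
  ultimately show ?thesis using split \<open>p2 \<noteq> []\<close> by simp
qed

lemma ex_tree_minimal:
  assumes "is_tree V E" "t0 \<in> A"
  obtains t where "t \<in> A" "A \<inter> down_open V E r t = {}"
proof -
  obtain t where t: "t \<in> A"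
    and least: "\<And>s. s \<in> A \<Longrightarrow> length (root_path V E r t) \<le> length (root_path V E r s)"
    using ex_has_least_nat[of "\<lambda>t. t \<in> A" t0 "\<lambda>t. length (root_path V E r t)"] assms(2) by blast
  have "A \<inter> down_open V E r t = {}"
    using least tree_lt_root_path_length[OF assms(1)] unfolding down_open_def by fastforce
  with t show thesis by (rule that)
qed

section \<open>Connected sets and components\<close>

lemma conn_setsI:
  "C \<subseteq> S \<Longrightarrow> (\<And>x y. x \<in> C \<Longrightarrow> y \<in> C \<Longrightarrow> \<exists>X\<in>F. X \<subseteq> C \<and> x \<in> X \<and> y \<in> X) \<Longrightarrow> C \<in> conn_sets S F"
  unfolding conn_sets_def by blast

lemma conn_setsD: "C \<in> conn_sets S F \<Longrightarrow> x \<in> C \<Longrightarrow> y \<in> C \<Longrightarrow> \<exists>X\<in>F. X \<subseteq> C \<and> x \<in> X \<and> y \<in> X"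
  unfolding conn_sets_def by blast

lemma conn_sets_subset: "C \<in> conn_sets S F \<Longrightarrow> C \<subseteq> S"
  unfolding conn_sets_def by blast

lemma conn_sets_Un:
  assumes "connectoid S F" "A \<in> conn_sets S F" "B \<in> conn_sets S F" "A \<inter> B \<noteq> {}"
  shows "A \<union> B \<in> conn_sets S F"
proof -
  obtain c where c: "c \<in> A" "c \<in> B" using assms(4) by blast
  have Un_F: "\<And>X Y. X \<in> F \<Longrightarrow> Y \<in> F \<Longrightarrow> X \<inter> Y \<noteq> {} \<Longrightarrow> X \<union> Y \<in> F"
    using assms(1) unfolding connectoid_def by blast
  have to_c: "\<exists>X\<in>F. X \<subseteq> A \<union> B \<and> x \<in> X \<and> c \<in> X" if "x \<in> A \<union> B" for x
    using that conn_setsD[OF assms(2) _ c(1), of x] conn_setsD[OF assms(3) _ c(2), of x] by blast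
  show ?thesis
  proof (rule conn_setsI)
    show "A \<union> B \<subseteq> S" using conn_sets_subset assms(2,3) by blast
  next
    fix x y assume xy: "x \<in> A \<union> B" "y \<in> A \<union> B"
    obtain X where X: "X \<in> F" "X \<subseteq> A \<union> B" "x \<in> X" "c \<in> X" using to_c xy(1) by blast
    obtain Y where Y: "Y \<in> F" "Y \<subseteq> A \<union> B" "y \<in> Y" "c \<in> Y" using to_c xy(2) by blast
    have "X \<union> Y \<in> F" using Un_F[OF X(1) Y(1)] X(4) Y(4) by blast
    then show "\<exists>X\<in>F. X \<subseteq> A \<union> B \<and> x \<in> X \<and> y \<in> X"
      using X Y by (intro bexI[of _ "X \<union> Y"]) auto
  qed
qed

lemma singleton_in_conn_sets:
  assumes "connectoid S F" "t \<in> S"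
  shows "{t} \<in> conn_sets S F"
  using assms unfolding connectoid_def conn_sets_def by blast

lemma compsD:
  assumes "K \<in> comps S F S'"
  shows "K \<noteq> {}" "K \<subseteq> S'" "K \<in> conn_sets S F"
    "\<And>K'. K \<subseteq> K' \<Longrightarrow> K' \<subseteq> S' \<Longrightarrow> K' \<in> conn_sets S F \<Longrightarrow> K' = K"
  using assms unfolding comps_def by auto

lemma ex_comp_containing:
  assumes "connectoid S F" "t \<in> S'" "S' \<subseteq> S"
  obtains K where "K \<in> comps S F S'" "t \<in> K"
proof -
  define K where "K = \<Union>{C \<in> conn_sets S F. C \<subseteq> S' \<and> t \<in> C}"
  have tK: "t \<in> K"
    unfolding K_def using singleton_in_conn_sets[OF assms(1)] assms(2,3) by blast
  have KS': "K \<subseteq> S'" unfolding K_def by blast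
  have "\<exists>X\<in>F. X \<subseteq> K \<and> x \<in> X \<and> y \<in> X" if xy: "x \<in> K" "y \<in> K" for x y
  proof -
    obtain C1 C2 where C: "C1 \<in> conn_sets S F" "C1 \<subseteq> S'" "t \<in> C1" "x \<in> C1"
      "C2 \<in> conn_sets S F" "C2 \<subseteq> S'" "t \<in> C2" "y \<in> C2" using xy unfolding K_def by auto
    have U: "C1 \<union> C2 \<in> conn_sets S F" using conn_sets_Un[OF assms(1) C(1) C(5)] C(3,7) by auto
    moreover have "C1 \<union> C2 \<subseteq> K" unfolding K_def using U C(2,3,6) by auto
    ultimately show ?thesis using conn_setsD[OF U, of x y] C(4,8) by blast
  qed
  then have "K \<in> conn_sets S F" using KS' assms(3) unfolding conn_sets_def by blast
  then have "K \<in> comps S F S'"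
    using tK KS' unfolding comps_def by (auto simp: K_def)
  then show thesis using tK by (rule that)
qed

lemma conn_subset_comp:
  assumes "connectoid S F" "K \<in> comps S F S'" "t \<in> K" "C \<in> conn_sets S F" "C \<subseteq> S'" "t \<in> C"
  shows "C \<subseteq> K"
proof -
  have "K \<union> C \<in> conn_sets S F"
    using conn_sets_Un[OF assms(1) compsD(3)[OF assms(2)] assms(4)] assms(3,6) by auto
  then have "K \<union> C = K" using compsD(4)[OF assms(2)] compsD(2)[OF assms(2)] assms(5) by auto
  then show ?thesis by auto
qed

section \<open>The components \<open>K\<^sub>t\<close> of a weak normal tree\<close>

lemma weak_normal_treeD:
  assumes "weak_normal_tree S F V E r"
  shows "is_tree V E" "V \<subseteq> S"
    "\<And>C u v. C \<in> conn_sets S F \<Longrightarrow> u \<in> C \<Longrightarrow> u \<in> V \<Longrightarrow> v \<in> C \<Longrightarrow> v \<in> V \<Longrightarrow>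
      \<not> tree_le V E r u v \<Longrightarrow> \<not> tree_le V E r v u \<Longrightarrow>
      \<exists>w\<in>C. tree_le V E r w u \<and> tree_le V E r w v"
  using assms unfolding weak_normal_tree_def rooted_tree_def by blast+

lemma K_tree_comp:
  assumes "connectoid S F" "weak_normal_tree S F V E r" "t \<in> V"
  shows "K_tree S F V E r t \<in> comps S F (S - down_open V E r t)" "t \<in> K_tree S F V E r t"
proof -
  have "t \<in> S - down_open V E r t"
    using weak_normal_treeD(2)[OF assms(2)] assms(3) by (auto simp: down_open_def tree_lt_def)
  then obtain K where K: "K \<in> comps S F (S - down_open V E r t)" "t \<in> K"
    by (rule ex_comp_containing[OF assms(1) _ Diff_subset])
  have "K' = K" if "K' \<in> comps S F (S - down_open V E r t)" "t \<in> K'" for K'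
    using conn_subset_comp[OF assms(1) K compsD(3,2)[OF that(1)] that(2)]
      conn_subset_comp[OF assms(1) that compsD(3,2)[OF K(1)] K(2)] by (rule antisym)
  then have "K_tree S F V E r t = K"
    unfolding K_tree_def using K by (intro the_equality) blast+
  with K show "K_tree S F V E r t \<in> comps S F (S - down_open V E r t)" "t \<in> K_tree S F V E r t"
    by simp_all
qed

lemma K_tree_inter_V_above:
  assumes "connectoid S F" "weak_normal_tree S F V E r" "t \<in> V"
    and s: "s \<in> K_tree S F V E r t" "s \<in> V" "s \<noteq> t"
  shows "tree_le V E r t s"
proof (rule ccontr)
  assume ts: "\<not> tree_le V E r t s"
  let ?Kt = "K_tree S F V E r t"
  have Kt: "?Kt \<subseteq> S - down_open V E r t" "?Kt \<in> conn_sets S F" "t \<in> ?Kt"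
    using K_tree_comp[OF assms(1-3)] compsD(2,3) by blast+
  have below_t: "w \<in> down_open V E r t" if "tree_le V E r w t" "w \<noteq> t" for w
    using that tree_le_in_V[OF that(1)] unfolding down_open_def tree_lt_def by blast
  show False
  proof (cases "tree_le V E r s t")
    case True
    then show False using below_t s Kt(1) by blast
  next
    case False
    then obtain w where "w \<in> ?Kt" "tree_le V E r w s" "tree_le V E r w t"
      using weak_normal_treeD(3)[OF assms(2) Kt(2) s(1,2) Kt(3) assms(3)] ts False by blast
    then show False using below_t ts Kt(1) by blast
  qed
qed

lemma conn_subset_K_tree:
  assumes "connectoid S F" "weak_normal_tree S F V E r" "t \<in> V"
    and "C \<in> conn_sets S F" "t \<in> C" "C \<inter> down_open V E r t = {}"
  shows "C \<subseteq> K_tree S F V E r t"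
  using conn_subset_comp[OF assms(1) K_tree_comp[OF assms(1-3)] assms(4) _ assms(5)]
    conn_sets_subset[OF assms(4)] assms(6) by blast

section \<open>Adhesion and the set \<open>N\<^sub>K\<close>\<close>

lemma N_K_subset_below_separator:
  assumes "connectoid S F" "weak_normal_tree S F V E r" "K \<in> comps S F (S - V)"
    and "X \<subseteq> V" "K \<in> comps S F (S - X)"
  shows "N_K S F V E r K \<subseteq> X \<union> (\<Union>x\<in>X. {t. tree_le V E r t x})"
proof
  fix t assume "t \<in> N_K S F V E r K"
  then have tV: "t \<in> V" and K_Kt: "K \<subseteq> K_tree S F V E r t" unfolding N_K_def by auto
  let ?Kt = "K_tree S F V E r t"
  show "t \<in> X \<union> (\<Union>x\<in>X. {t. tree_le V E r t x})"
  proof (rule ccontr)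
    assume t_not_below: "t \<notin> X \<union> (\<Union>x\<in>X. {t. tree_le V E r t x})"
    have "?Kt \<inter> X = {}"
      using K_tree_inter_V_above[OF assms(1,2) tV] t_not_below assms(4) by blast
    then have "?Kt \<subseteq> S - X" using K_tree_comp[OF assms(1,2) tV] compsD(2) by blast
    then have "?Kt = K" using compsD(4)[OF assms(5) K_Kt] K_tree_comp[OF assms(1,2) tV] compsD(3)
      by blast
    then show False using K_tree_comp(2)[OF assms(1,2) tV] tV compsD(2)[OF assms(3)] by blast
  qed
qed

lemma finite_N_K_if_finite_adhesion:
  assumes "connectoid S F" "weak_normal_tree S F V E r" "K \<in> comps S F (S - V)"
    and "finite_adhesion S F V K"
  shows "finite (N_K S F V E r K)"
proof -
  obtain X where X: "X \<subseteq> V" "finite X" "K \<in> comps S F (S - X)"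
    using assms(4) unfolding finite_adhesion_def by blast
  have "finite (X \<union> (\<Union>x\<in>X. {t. tree_le V E r t x}))"
    using X(2) finite_tree_le_below[OF weak_normal_treeD(1)[OF assms(2)]] by blast
  then show ?thesis using N_K_subset_below_separator[OF assms(1-3) X(1,3)] finite_subset by blast
qed

lemma comp_minus_N_K:
  assumes "connectoid S F" "weak_normal_tree S F V E r" "K \<in> comps S F (S - V)"
  shows "K \<in> comps S F (S - N_K S F V E r K)"
proof -
  have maximal: "K' = K"
    if K': "K \<subseteq> K'" "K' \<subseteq> S - N_K S F V E r K" "K' \<in> conn_sets S F" for K'
  proof (rule ccontr)
    assume "K' \<noteq> K"
    moreover have "K' \<subseteq> S" using conn_sets_subset[OF K'(3)] .
    ultimately obtain t0 where "t0 \<in> K' \<inter> V"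
      using compsD(4)[OF assms(3) K'(1) _ K'(3)] by blast
    then obtain t where t: "t \<in> K' \<inter> V" "(K' \<inter> V) \<inter> down_open V E r t = {}"
      by (rule ex_tree_minimal[OF weak_normal_treeD(1)[OF assms(2)]])
    then have "K' \<inter> down_open V E r t = {}" unfolding down_open_def by blast
    then have "K' \<subseteq> K_tree S F V E r t"
      using conn_subset_K_tree[OF assms(1,2) _ K'(3)] t(1) by blast
    then have "t \<in> N_K S F V E r K" unfolding N_K_def using K'(1) t(1) by blast
    then show False using K'(2) t(1) by blast
  qed
  have "N_K S F V E r K \<subseteq> V" unfolding N_K_def by blast
  then have "K \<subseteq> S - N_K S F V E r K" using compsD(2)[OF assms(3)] by blast
  then show ?thesis unfolding comps_def using compsD(1,3)[OF assms(3)] maximal by blast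
qed

theorem proposition6p2:
  fixes S :: "'a set" and F :: "'a set set" and V :: "'a set"
    and E :: "'a \<Rightarrow> 'a \<Rightarrow> bool" and r :: 'a and K :: "'a set"
  assumes "connectoid S F"
    and "S \<in> conn_sets S F"
    and "weak_normal_tree S F V E r"
    and "K \<in> comps S F (S - V)"
  shows "finite_adhesion S F V K \<longleftrightarrow> finite (N_K S F V E r K)"
proof
  assume "finite_adhesion S F V K"
  then show "finite (N_K S F V E r K)" by (rule finite_N_K_if_finite_adhesion[OF assms(1,3,4)])
next
  assume "finite (N_K S F V E r K)"
  moreover have "N_K S F V E r K \<subseteq> V" unfolding N_K_def by blast
  ultimately show "finite_adhesion S F V K"
    using comp_minus_N_K[OF assms(1,3,4)] unfolding finite_adhesion_def by blast
qed

end
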